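(* Let $G$ be a graph, let $G'$ be a 2-connected bipartite subgraph of $G$, and let $B$ be a 2-connected subgraph of $G$ that contains $G'$ as a subgraph. If $B$ is not bipartite, then $B$ contains a bad path for $G'$.
   Context: Since $G'$ is connected and bipartite, its bipartition into two parts is unique. A path $P_{uv}$ in $G$ with endpoints $u,v$ is a bad path for $G'$ if $u,v\in V(G')$, all other vertices of $P_{uv}$ lie in $V(G)\setminus V(G')$, and at least one of the following holds: (a) $u,v$ are in the same part of $G'$ and $P_{uv}$ has odd length (number of edges); (b) $u,v$ are in different parts of $G'$ and $P_{uv}$ has even length. *)

theory Defs
  imports Main
begin

type_synonym 'a graph = "'a set \<times> 'a set set"

definition verts :: "'a graph \<Rightarrow> 'a set" where "verts G = fst G"
definition edges :: "'a graph \<Rightarrow> 'a set set" where "edges G = snd G"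

definition is_graph :: "'a graph \<Rightarrow> bool" where
  "is_graph G \<longleftrightarrow> finite (verts G) \<and>
     (\<forall>e\<in>edges G. \<exists>u v. u \<noteq> v \<and> e = {u, v} \<and> u \<in> verts G \<and> v \<in> verts G)"

definition subgraph :: "'a graph \<Rightarrow> 'a graph \<Rightarrow> bool" where
  "subgraph H G \<longleftrightarrow> is_graph H \<and> is_graph G \<and> verts H \<subseteq> verts G \<and> edges H \<subseteq> edges G"

text \<open>A path in G, given as its (nonempty, distinct) vertex sequence; its length is the
  number of edges, i.e. length xs - 1.\<close>
definition is_path :: "'a graph \<Rightarrow> 'a list \<Rightarrow> bool" where
  "is_path G xs \<longleftrightarrow> xs \<noteq> [] \<and> distinct xs \<and> set xs \<subseteq> verts G \<and>
     (\<forall>i. Suc i < length xs \<longrightarrow> {xs ! i, xs ! Suc i} \<in> edges G)"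

definition connected_graph :: "'a graph \<Rightarrow> bool" where
  "connected_graph G \<longleftrightarrow> verts G \<noteq> {} \<and>
     (\<forall>u\<in>verts G. \<forall>v\<in>verts G. \<exists>xs. is_path G xs \<and> hd xs = u \<and> last xs = v)"

definition delete_vertex :: "'a graph \<Rightarrow> 'a \<Rightarrow> 'a graph" where
  "delete_vertex G x = (verts G - {x}, {e\<in>edges G. x \<notin> e})"

definition two_connected :: "'a graph \<Rightarrow> bool" where
  "two_connected G \<longleftrightarrow> is_graph G \<and> card (verts G) \<ge> 3 \<and> connected_graph G \<and>
     (\<forall>x\<in>verts G. connected_graph (delete_vertex G x))"

definition proper_2col :: "'a graph \<Rightarrow> ('a \<Rightarrow> bool) \<Rightarrow> bool" where
  "proper_2col G c \<longleftrightarrow> (\<forall>u v. {u, v} \<in> edges G \<longrightarrow> c u \<noteq> c v)"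

definition bipartite :: "'a graph \<Rightarrow> bool" where
  "bipartite G \<longleftrightarrow> (\<exists>c. proper_2col G c)"

text \<open>u and v lie in the same part of the (unique, for connected G') bipartition of G'.\<close>
definition same_part :: "'a graph \<Rightarrow> 'a \<Rightarrow> 'a \<Rightarrow> bool" where
  "same_part G' u v \<longleftrightarrow> (\<forall>c. proper_2col G' c \<longrightarrow> c u = c v)"

definition bad_path :: "'a graph \<Rightarrow> 'a list \<Rightarrow> bool" where
  "bad_path G' xs \<longleftrightarrow> xs \<noteq> [] \<and> hd xs \<in> verts G' \<and> last xs \<in> verts G' \<and>
     (\<forall>i. 0 < i \<and> Suc i < length xs \<longrightarrow> xs ! i \<notin> verts G') \<and>
     ((same_part G' (hd xs) (last xs) \<and> odd (length xs - 1)) \<or>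
      (\<not> same_part G' (hd xs) (last xs) \<and> even (length xs - 1)))"

end

theory Submission
  imports Defs
begin

text \<open>Suppose B has no bad path and let c be a proper 2-colouring of G'. For a vertex set W,
  call a path of B a W-path if its ends lie in W and its inner vertices do not, and call a
  colouring parity-consistent on W if every W-path has even length exactly when its ends get
  the same colour. Having no bad path means that c is parity-consistent on V(G').
  As long as W \<noteq> V(B), 2-connectivity of B yields a W-path P through a vertex outside W.
  Colouring P alternately keeps parity-consistency on W \<union> V(P): a (W \<union> V(P))-path with an
  end inside P, spliced with the segments of P beyond its ends, becomes a W-path, and the
  alternately coloured segments contribute nothing to the parity balance. Once W = V(B), every edge is a
  W-path, so the colouring is proper and B is bipartite.\<close>

lemma is_path_iff_successively:
  "is_path G xs \<longleftrightarrow> xs \<noteq> [] \<and> distinct xs \<and> set xs \<subseteq> verts G \<and>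
     successively (\<lambda>u v. {u, v} \<in> edges G) xs"
  by (simp add: is_path_def successively_conv_nth)

lemma is_path_rev: "is_path G (rev xs) \<longleftrightarrow> is_path G xs"
  by (auto simp: is_path_iff_successively insert_commute)

lemma is_path_split:
  "is_path G (xs @ v # ys) \<longleftrightarrow>
     is_path G (xs @ [v]) \<and> is_path G (v # ys) \<and> set xs \<inter> set (v # ys) = {}"
  by (auto simp: is_path_iff_successively successively_append_iff successively_Cons)

lemma is_path_delete_vertex:
  "is_path (delete_vertex G u) xs \<Longrightarrow> is_path G xs \<and> u \<notin> set xs"
  unfolding is_path_def delete_vertex_def verts_def edges_def by auto

lemma edge_endpoints:
  assumes "is_graph G" "{u, v} \<in> edges G"
  shows "u \<noteq> v" "u \<in> verts G" "v \<in> verts G"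
  using assms unfolding is_graph_def by (metis doubleton_eq_iff)+

lemma connected_path_to_set:
  assumes "connected_graph G" "y \<in> verts G" "w \<in> W \<inter> verts G"
  obtains ys v where "is_path G (ys @ [v])" "hd (ys @ [v]) = y" "v \<in> W" "set ys \<inter> W = {}"
proof -
  obtain xs where xs: "is_path G xs" "hd xs = y" "last xs = w"
    using assms unfolding connected_graph_def by blast
  have "xs \<noteq> []"
    using xs(1) by (simp add: is_path_def)
  then have "w \<in> set xs"
    using xs(3) by auto
  then obtain ys v zs where split: "xs = ys @ v # zs" "v \<in> W" "\<forall>x\<in>set ys. x \<notin> W"
    using split_list_first_prop[of xs "\<lambda>x. x \<in> W"] assms(3) by blast
  have "is_path G (ys @ [v])"
    using xs(1) split(1) is_path_split by metis
  moreover have "hd (ys @ [v]) = y"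
    using xs(2) split(1) by (cases ys) simp_all
  ultimately show ?thesis
    using that split by blast
qed

lemma two_paths_join:
  assumes xs: "is_path G xs" and ys: "is_path G ys" and "hd xs = hd ys" "last xs \<notin> set ys"
  obtains zs z where "is_path G zs" "hd zs = last xs" "last zs = last ys"
    "set zs \<subseteq> set xs \<union> set ys" "z \<in> set zs" "z \<in> set xs" "z \<noteq> last xs"
proof -
  have "xs \<noteq> []" "ys \<noteq> []"
    using xs ys by (simp_all add: is_path_def)
  then have "hd ys \<in> set xs" "hd ys \<in> set ys"
    using \<open>hd xs = hd ys\<close> by (metis hd_in_set)+
  \<comment> \<open>z is the last vertex of ys on xs: run back along xs from its end to z, then along ys.\<close>
  then obtain q1 z q2 where ys_split: "ys = q1 @ z # q2" "z \<in> set xs" "\<forall>x\<in>set q2. x \<notin> set xs"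
    using split_list_last_prop[of ys "\<lambda>x. x \<in> set xs"] by blast
  obtain p1 p2 where xs_split: "xs = p1 @ z # p2"
    using ys_split(2) split_list by metis
  have "z \<noteq> last xs"
    using assms(4) ys_split(1) by auto
  then have "p2 \<noteq> []"
    using xs_split by auto
  have path1: "is_path G (z # p2)"
    using xs is_path_split[of G p1 z p2] unfolding xs_split by blast
  have path2: "is_path G (z # q2)"
    using ys is_path_split[of G q1 z q2] unfolding ys_split(1) by blast
  have "z \<notin> set p2"
    using path1 by (simp add: is_path_def)
  moreover have "set p2 \<subseteq> set xs" "set q2 \<subseteq> set ys"
    unfolding xs_split ys_split(1) by auto
  ultimately have "set (rev p2) \<inter> set (z # q2) = {}"
    using ys_split(3) by auto
  moreover have "is_path G (rev p2 @ [z])"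
    using path1 is_path_rev[of G "z # p2"] by (simp only: rev.simps)
  ultimately have "is_path G (rev p2 @ z # q2)"
    using path2 by (simp only: is_path_split[of G "rev p2" z q2] simp_thms)
  moreover have "hd (rev p2 @ z # q2) = last xs"
    using xs_split \<open>p2 \<noteq> []\<close> by (simp add: hd_rev)
  moreover have "last (rev p2 @ z # q2) = last ys"
    using ys_split(1) by (simp add: last_append)
  moreover have "set (rev p2 @ z # q2) \<subseteq> set xs \<union> set ys"
    using \<open>set p2 \<subseteq> set xs\<close> \<open>set q2 \<subseteq> set ys\<close> ys_split(2) by auto
  moreover have "z \<in> set (rev p2 @ z # q2)"
    by simp
  ultimately show ?thesis
    using ys_split(2) \<open>z \<noteq> last xs\<close> by (rule that)
qed

definition is_W_path :: "'a graph \<Rightarrow> 'a set \<Rightarrow> 'a list \<Rightarrow> bool" where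
  "is_W_path G W xs \<longleftrightarrow>
     is_path G xs \<and> hd xs \<in> W \<and> last xs \<in> W \<and> set xs \<inter> W \<subseteq> {hd xs, last xs}"

lemma ear_exists:
  assumes "two_connected G" "W \<subseteq> verts G" "a \<in> W" "b \<in> W" "a \<noteq> b" "y \<in> verts G - W"
  obtains P where "is_W_path G W P" "\<not> set P \<subseteq> W"
proof -
  have conn: "connected_graph G" "\<And>x. x \<in> verts G \<Longrightarrow> connected_graph (delete_vertex G x)"
    using assms(1) by (auto simp: two_connected_def)
  obtain ys u where P1: "is_path G (ys @ [u])" "hd (ys @ [u]) = y" "u \<in> W" "set ys \<inter> W = {}"
    using connected_path_to_set[OF conn(1)] assms by (metis Diff_iff IntI subsetD)
  obtain w where w: "w \<in> W" "w \<noteq> u"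
    using assms(3-5) by blast
  have "u \<in> verts G"
    using assms(2) P1(3) by blast
  moreover have "y \<in> verts (delete_vertex G u)" "w \<in> W \<inter> verts (delete_vertex G u)"
    using assms(2,6) P1(3) w by (auto simp: delete_vertex_def verts_def)
  ultimately obtain zs v where P2_del: "is_path (delete_vertex G u) (zs @ [v])" and
    P2: "hd (zs @ [v]) = y" "v \<in> W" "set zs \<inter> W = {}"
    by (rule connected_path_to_set[OF conn(2)])
  have "is_path G (zs @ [v])" "last (ys @ [u]) \<notin> set (zs @ [v])"
    using is_path_delete_vertex[OF P2_del] by auto
  then obtain R z where R: "is_path G R" "hd R = u" "last R = v"
    "set R \<subseteq> set (ys @ [u]) \<union> set (zs @ [v])" "z \<in> set R" "z \<in> set (ys @ [u])" "z \<noteq> u"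
    using two_paths_join[OF P1(1)] P1(2) P2(1) by (metis last_snoc)
  then have "is_W_path G W R"
    using P1(3,4) P2(2,3) by (auto simp: is_W_path_def)
  moreover have "z \<notin> W"
    using R(6,7) P1(4) by auto
  ultimately show ?thesis
    using that R(5) by blast
qed

definition parity_agrees :: "('a \<Rightarrow> bool) \<Rightarrow> 'a list \<Rightarrow> bool" where
  "parity_agrees c xs \<longleftrightarrow> (c (hd xs) = c (last xs) \<longleftrightarrow> even (length xs - 1))"

lemma parity_agrees_if_hd_eq_last: "distinct xs \<Longrightarrow> hd xs = last xs \<Longrightarrow> parity_agrees c xs"
  by (cases xs rule: rev_cases) (auto simp: parity_agrees_def hd_append split: if_splits)

lemma parity_agrees_cong:
  "c (hd xs) = d (hd xs) \<Longrightarrow> c (last xs) = d (last xs) \<Longrightarrow> parity_agrees c xs \<longleftrightarrow> parity_agrees d xs"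
  by (simp add: parity_agrees_def)

lemma parity_agrees_rev: "parity_agrees c (rev xs) \<longleftrightarrow> parity_agrees c xs"
  by (auto simp: parity_agrees_def hd_rev last_rev)

lemma parity_agrees_append_left:
  assumes "parity_agrees c (xs @ [v])"
  shows "parity_agrees c (xs @ v # ys) \<longleftrightarrow> parity_agrees c (v # ys)"
  using assms by (cases xs) (auto simp: parity_agrees_def)

lemma parity_agrees_append_right:
  assumes "parity_agrees c (v # ys)"
  shows "parity_agrees c (xs @ v # ys) \<longleftrightarrow> parity_agrees c (xs @ [v])"
  using assms by (cases xs) (auto simp: parity_agrees_def)

lemma successively_append_D:
  "successively R (xs @ ys) \<Longrightarrow> successively R xs"
  "successively R (xs @ ys) \<Longrightarrow> successively R ys"
  by (simp_all add: successively_append_iff)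

lemma parity_agrees_if_alternating:
  "successively (\<lambda>x y. c x \<noteq> c y) xs \<Longrightarrow> xs \<noteq> [] \<Longrightarrow> parity_agrees c xs"
proof (induction xs rule: induct_list012)
  case (3 x y zs)
  then show ?case
    by (auto simp: parity_agrees_def)
qed (simp_all add: parity_agrees_def)

lemma proper_2col_alternates_on_path:
  "proper_2col G c \<Longrightarrow> is_path G xs \<Longrightarrow> successively (\<lambda>x y. c x \<noteq> c y) xs"
  unfolding is_path_iff_successively proper_2col_def by (auto elim: successively_mono)

lemma alternating_update_exists:
  fixes g :: "'a \<Rightarrow> bool"
  assumes "distinct xs"
  shows "\<exists>f. (\<forall>x. x \<notin> set xs \<longrightarrow> f x = g x) \<and> (xs \<noteq> [] \<longrightarrow> f (hd xs) = b) \<and>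
    successively (\<lambda>x y. f x \<noteq> f y) xs"
  using assms
proof (induction xs arbitrary: b)
  case Nil
  show ?case
    by auto
next
  case (Cons x xs)
  obtain f where f: "\<forall>y. y \<notin> set xs \<longrightarrow> f y = g y" "xs \<noteq> [] \<longrightarrow> f (hd xs) = (\<not> b)"
    "successively (\<lambda>x y. f x \<noteq> f y) xs"
    using Cons.IH[of "\<not> b"] Cons.prems by auto
  have "successively (\<lambda>u w. (f(x := b)) u \<noteq> (f(x := b)) w) xs"
    using f(3) Cons.prems by (subst successively_cong) auto
  moreover have "hd xs \<noteq> x \<and> f (hd xs) = (\<not> b)" if "xs \<noteq> []"
    using that f(2) Cons.prems hd_in_set[OF that] by auto
  ultimately show ?case
    using f(1) by (intro exI[of _ "f(x := b)"]) (auto simp: successively_Cons)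
qed

definition parity_consistent :: "'a graph \<Rightarrow> 'a set \<Rightarrow> ('a \<Rightarrow> bool) \<Rightarrow> bool" where
  "parity_consistent G W c \<longleftrightarrow> (\<forall>xs. is_W_path G W xs \<longrightarrow> parity_agrees c xs)"

lemma parity_consistent_cong:
  "parity_consistent G W c \<Longrightarrow> \<forall>x\<in>W. d x = c x \<Longrightarrow> parity_consistent G W d"
  unfolding parity_consistent_def is_W_path_def using parity_agrees_cong by metis

lemma is_W_path_rev: "is_W_path G W (rev xs) \<longleftrightarrow> is_W_path G W xs"
  by (auto simp: is_W_path_def is_path_rev hd_rev last_rev)

lemma is_W_path_splice_two_ends:
  assumes P: "is_W_path G W P" and Q: "is_W_path G (W \<union> set P) Q"
    and ends: "hd Q = h" "last Q = l" and split: "P = as @ h # ms @ l # bs"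
  shows "is_W_path G W (as @ Q @ bs)"
proof -
  have "is_path G P" "is_path G Q"
    using P Q by (simp_all add: is_W_path_def)
  then have "distinct P" "distinct Q" "Q \<noteq> []"
    by (simp_all add: is_path_def)
  obtain Q1 Qh where Q1: "Q = h # Q1" and Qh: "Q = Qh @ [l]"
    using \<open>Q \<noteq> []\<close> ends by (metis append_butlast_last_id list.collapse)
  have Q_meets: "set Q \<inter> (W \<union> set P) \<subseteq> {h, l}"
    using Q ends by (simp add: is_W_path_def)
  have "distinct (as @ h # ms @ l # bs)" "distinct (Qh @ [l])"
    using \<open>distinct P\<close> \<open>distinct Q\<close> split Qh by simp_all
  moreover have "set Qh \<subseteq> set Q" "set as \<subseteq> set P" "set bs \<subseteq> set P" "{h, l} \<subseteq> set P"
    using Qh split by auto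
  ultimately have disj: "set as \<inter> set Q = {}" "set (as @ Qh) \<inter> set (l # bs) = {}"
    using Q_meets by auto
  have prefix: "is_path G (as @ [h])" and suffix: "is_path G (l # bs)"
    using \<open>is_path G P\<close> is_path_split[of G as h "ms @ l # bs"]
      is_path_split[of G "as @ h # ms" l bs] split by auto
  have "is_path G (as @ Q)"
    using prefix \<open>is_path G Q\<close> disj(1) is_path_split[of G as h Q1] Q1 by simp
  then have "is_path G (as @ Q @ bs)"
    using suffix disj(2) is_path_split[of G "as @ Qh" l bs] Qh by simp
  moreover have "hd (as @ Q @ bs) = hd P" "last (as @ Q @ bs) = last P"
    using split ends \<open>Q \<noteq> []\<close> by (simp_all add: hd_append last_append)
  moreover have "set (as @ Q @ bs) \<inter> W \<subseteq> {hd P, last P}"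
  proof -
    have "set P \<inter> W \<subseteq> {hd P, last P}"
      using P by (simp add: is_W_path_def)
    then show ?thesis
      using Q_meets \<open>set as \<subseteq> set P\<close> \<open>set bs \<subseteq> set P\<close> \<open>{h, l} \<subseteq> set P\<close> by auto
  qed
  ultimately show ?thesis
    using P by (simp add: is_W_path_def)
qed

lemma is_W_path_splice_one_end:
  assumes P: "is_W_path G W P" and Q: "is_W_path G (W \<union> set P) Q"
    and ends: "hd Q = h" "h \<notin> W" "last Q \<notin> set P" and split: "P = as @ h # bs"
  shows "is_W_path G W (as @ Q)"
proof -
  have "is_path G P" "is_path G Q"
    using P Q by (simp_all add: is_W_path_def)
  then have "distinct P" "Q \<noteq> []"
    by (simp_all add: is_path_def)
  obtain Q1 where Q1: "Q = h # Q1"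
    using \<open>Q \<noteq> []\<close> ends(1) by (metis list.collapse)
  have Q_meets: "set Q \<inter> (W \<union> set P) \<subseteq> {h, last Q}"
    using Q ends by (simp add: is_W_path_def)
  have "last Q \<in> W"
    using Q ends(3) by (simp add: is_W_path_def)
  have "last P \<in> W" "set P \<inter> W \<subseteq> {hd P, last P}"
    using P by (simp_all add: is_W_path_def)
  then have "bs \<noteq> []"
    using ends(2) split by auto
  then have "last P \<in> set bs"
    using split by simp
  have "set as \<inter> set Q = {}"
    using Q_meets \<open>distinct P\<close> ends(3) split by auto
  then have "is_path G (as @ Q)"
    using \<open>is_path G P\<close> \<open>is_path G Q\<close> split is_path_split[of G as h bs] is_path_split[of G as h Q1] Q1
    by simp
  moreover have "hd (as @ Q) = hd P" "last (as @ Q) = last Q"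
    using split ends(1) \<open>Q \<noteq> []\<close> by (simp_all add: hd_append)
  moreover have "set (as @ Q) \<inter> W \<subseteq> {hd P, last Q}"
    using Q_meets \<open>set P \<inter> W \<subseteq> {hd P, last P}\<close> \<open>last P \<in> set bs\<close> \<open>distinct P\<close> ends(2) split
    by auto
  ultimately show ?thesis
    using P \<open>last Q \<in> W\<close> by (simp add: is_W_path_def)
qed

lemma parity_agrees_splice_two_ends:
  assumes cons: "parity_consistent G W d" and P: "is_W_path G W P"
    and Q: "is_W_path G (W \<union> set P) Q" and ends: "hd Q = h" "last Q = l"
    and split: "P = as @ h # ms @ l # bs"
    and alt: "successively (\<lambda>x y. d x \<noteq> d y) P"
  shows "parity_agrees d Q"
proof -
  have "Q \<noteq> []"
    using Q by (simp add: is_W_path_def is_path_def)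
  then obtain Q1 Qh where Q1: "Q = h # Q1" and Qh: "Q = Qh @ [l]"
    using ends by (metis append_butlast_last_id list.collapse)
  have "parity_agrees d (as @ Q @ bs)"
    using is_W_path_splice_two_ends[OF P Q ends split] cons by (simp add: parity_consistent_def)
  moreover have "parity_agrees d (as @ [h])" "parity_agrees d (l # bs)"
  proof -
    have "successively (\<lambda>x y. d x \<noteq> d y) ((as @ [h]) @ ms @ l # bs)"
      "successively (\<lambda>x y. d x \<noteq> d y) ((as @ h # ms) @ l # bs)"
      using alt split by simp_all
    then show "parity_agrees d (as @ [h])" "parity_agrees d (l # bs)"
      using parity_agrees_if_alternating successively_append_D by blast+
  qed
  ultimately have "parity_agrees d (as @ Q)"
    using parity_agrees_append_right[of d l bs "as @ Qh"] Qh by simp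
  then show ?thesis
    using parity_agrees_append_left[of d as h Q1] \<open>parity_agrees d (as @ [h])\<close> Q1 by simp
qed

lemma parity_agrees_splice_one_end:
  assumes cons: "parity_consistent G W d" and P: "is_W_path G W P"
    and Q: "is_W_path G (W \<union> set P) Q" and ends: "hd Q = h" "h \<notin> W" "last Q \<notin> set P"
    and "h \<in> set P" and alt: "successively (\<lambda>x y. d x \<noteq> d y) P"
  shows "parity_agrees d Q"
proof -
  obtain as bs where split: "P = as @ h # bs"
    using \<open>h \<in> set P\<close> split_list by metis
  have "Q \<noteq> []"
    using Q by (simp add: is_W_path_def is_path_def)
  then obtain Q1 where Q1: "Q = h # Q1"
    using ends(1) by (metis list.collapse)
  have "parity_agrees d (as @ Q)"
    using is_W_path_splice_one_end[OF P Q ends split] cons by (simp add: parity_consistent_def)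
  moreover have "successively (\<lambda>x y. d x \<noteq> d y) ((as @ [h]) @ bs)"
    using alt split by simp
  then have "parity_agrees d (as @ [h])"
    using parity_agrees_if_alternating successively_append_D by blast
  ultimately show ?thesis
    using parity_agrees_append_left[of d as h Q1] Q1 by simp
qed

lemma parity_agrees_ends_on_path:
  assumes cons: "parity_consistent G W d" and P: "is_W_path G W P"
    and Q: "is_W_path G (W \<union> set P) Q" and ends: "hd Q \<in> set P" "last Q \<in> set P"
    and alt: "successively (\<lambda>x y. d x \<noteq> d y) P"
  shows "parity_agrees d Q"
proof (cases "hd Q = last Q")
  case True
  have "distinct Q"
    using Q by (simp add: is_W_path_def is_path_def)
  then show ?thesis
    using True parity_agrees_if_hd_eq_last by blast
next
  case False
  obtain as rest where P_split: "P = as @ hd Q # rest"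
    using split_list ends(1) by metis
  then have "last Q \<in> set rest \<or> last Q \<in> set as"
    using ends(2) False by auto
  then show ?thesis
  proof
    assume "last Q \<in> set rest"
    then obtain ms bs where "rest = ms @ last Q # bs"
      using split_list by metis
    then show ?thesis
      by (intro parity_agrees_splice_two_ends[OF cons P Q refl refl _ alt]) (simp add: P_split)
  next
    assume "last Q \<in> set as"
    then obtain as' ms where "as = as' @ last Q # ms"
      using split_list by metis
    moreover have "is_W_path G (W \<union> set P) (rev Q)"
      using Q by (simp add: is_W_path_rev)
    ultimately have "parity_agrees d (rev Q)"
      by (intro parity_agrees_splice_two_ends[OF cons P _ _ _ _ alt, of "rev Q" "last Q" "hd Q" as' ms rest])
        (simp_all add: P_split hd_rev last_rev)
    then show ?thesis
      by (simp add: parity_agrees_rev)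
  qed
qed

lemma parity_consistent_Un_alternating_path:
  assumes cons: "parity_consistent G W d" and P: "is_W_path G W P"
    and alt: "successively (\<lambda>x y. d x \<noteq> d y) P"
  shows "parity_consistent G (W \<union> set P) d"
  unfolding parity_consistent_def
proof (intro allI impI)
  fix Q
  assume Q: "is_W_path G (W \<union> set P) Q"
  then have Q_rev: "is_W_path G (W \<union> set P) (rev Q)"
    by (simp add: is_W_path_rev)
  have "Q \<noteq> []" "hd Q \<in> W \<union> set P" "last Q \<in> W \<union> set P"
    using Q by (simp_all add: is_W_path_def is_path_def)
  then consider (in_W) "hd Q \<in> W" "last Q \<in> W" | (on_P) "hd Q \<in> set P" "last Q \<in> set P"
    | (hd_on_P) "hd Q \<in> set P" "hd Q \<notin> W" "last Q \<notin> set P"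
    | (last_on_P) "last Q \<in> set P" "last Q \<notin> W" "hd Q \<notin> set P"
    by blast
  then show "parity_agrees d Q"
  proof cases
    case in_W
    then have "is_W_path G W Q"
      using Q by (auto simp: is_W_path_def)
    then show ?thesis
      using cons by (simp add: parity_consistent_def)
  next
    case on_P
    then show ?thesis
      using parity_agrees_ends_on_path[OF cons P Q _ _ alt] by blast
  next
    case hd_on_P
    then show ?thesis
      using parity_agrees_splice_one_end[OF cons P Q refl _ _ _ alt] by blast
  next
    case last_on_P
    then have "parity_agrees d (rev Q)"
      using parity_agrees_splice_one_end[OF cons P Q_rev _ _ _ _ alt, of "last Q"] \<open>Q \<noteq> []\<close>
      by (simp add: hd_rev last_rev)
    then show ?thesis
      by (simp add: parity_agrees_rev)
  qed
qed

lemma parity_consistent_extend: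
  assumes cons: "parity_consistent G W c" and P: "is_W_path G W P"
  obtains d where "\<forall>x\<in>W. d x = c x" "parity_consistent G (W \<union> set P) d"
proof -
  have "distinct P" "P \<noteq> []"
    using P by (simp_all add: is_W_path_def is_path_def)
  obtain d where d: "\<forall>x. x \<notin> set P \<longrightarrow> d x = c x" "d (hd P) = c (hd P)"
    and alt: "successively (\<lambda>x y. d x \<noteq> d y) P"
    using alternating_update_exists[OF \<open>distinct P\<close>, of c "c (hd P)"] \<open>P \<noteq> []\<close> by auto
  have "parity_agrees d P" "parity_agrees c P"
    using parity_agrees_if_alternating[OF alt \<open>P \<noteq> []\<close>] cons P
    by (simp_all add: parity_consistent_def)
  then have "d (last P) = c (last P)"
    using d(2) unfolding parity_agrees_def by (metis (full_types))
  then have agree: "\<forall>x\<in>W. d x = c x"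
    using d P unfolding is_W_path_def by blast
  then have "parity_consistent G W d"
    using cons parity_consistent_cong by blast
  then show ?thesis
    using that agree parity_consistent_Un_alternating_path P alt by blast
qed

lemma proper_2col_if_parity_consistent:
  assumes "is_graph G" "verts G \<subseteq> W" "parity_consistent G W c"
  shows "proper_2col G c"
  unfolding proper_2col_def
proof (intro allI impI)
  fix u v
  assume uv: "{u, v} \<in> edges G"
  then have "u \<noteq> v" "u \<in> verts G" "v \<in> verts G"
    using edge_endpoints[OF assms(1)] by blast+
  then have "is_W_path G W [u, v]"
    using uv assms(2) by (auto simp: is_W_path_def is_path_iff_successively)
  then have "parity_agrees c [u, v]"
    using assms(3) by (simp add: parity_consistent_def)
  then show "c u \<noteq> c v"
    by (simp add: parity_agrees_def)
qed

lemma parity_consistent_extends_to_proper_2col: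
  assumes "two_connected G" "W \<subseteq> verts G" "a \<in> W" "b \<in> W" "a \<noteq> b" "parity_consistent G W c"
  shows "\<exists>d. proper_2col G d \<and> (\<forall>x\<in>W. d x = c x)"
  using assms(2-6)
proof (induction "card (verts G - W)" arbitrary: W c rule: less_induct)
  case less
  have "is_graph G"
    using assms(1) by (simp add: two_connected_def)
  show ?case
  proof (cases "verts G \<subseteq> W")
    case True
    then show ?thesis
      using proper_2col_if_parity_consistent \<open>is_graph G\<close> less.prems(5) by blast
  next
    case False
    then obtain y where "y \<in> verts G - W"
      by blast
    then obtain P where P: "is_W_path G W P" "\<not> set P \<subseteq> W"
      using ear_exists[OF assms(1) less.prems(1-4)] by blast
    obtain d where d: "\<forall>x\<in>W. d x = c x" "parity_consistent G (W \<union> set P) d"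
      using parity_consistent_extend[OF less.prems(5) P(1)] by blast
    have "set P \<subseteq> verts G"
      using P(1) by (simp add: is_W_path_def is_path_def)
    then have "verts G - (W \<union> set P) \<subset> verts G - W"
      using P(2) by blast
    then have "card (verts G - (W \<union> set P)) < card (verts G - W)"
      using \<open>is_graph G\<close> by (simp add: is_graph_def psubset_card_mono)
    then obtain e where "proper_2col G e" "\<forall>x\<in>W \<union> set P. e x = d x"
      using less.hyps[of "W \<union> set P" d] less.prems(1-4) \<open>set P \<subseteq> verts G\<close> d(2) by blast
    then show ?thesis
      using d(1) by auto
  qed
qed

lemma same_part_iff:
  assumes "connected_graph G" "proper_2col G c" "u \<in> verts G" "v \<in> verts G"
  shows "same_part G u v \<longleftrightarrow> c u = c v"
proof
  assume "c u = c v"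
  obtain xs where xs: "is_path G xs" "hd xs = u" "last xs = v"
    using assms unfolding connected_graph_def by blast
  have "xs \<noteq> []"
    using xs(1) by (simp add: is_path_def)
  have agrees: "parity_agrees c' xs" if "proper_2col G c'" for c'
    using parity_agrees_if_alternating[OF proper_2col_alternates_on_path[OF that xs(1)] \<open>xs \<noteq> []\<close>] .
  show "same_part G u v"
    unfolding same_part_def
  proof (intro allI impI)
    fix c'
    assume "proper_2col G c'"
    then show "c' u = c' v"
      using agrees[of c'] agrees[OF assms(2)] \<open>c u = c v\<close> xs(2,3) by (simp add: parity_agrees_def)
  qed
next
  show "same_part G u v \<Longrightarrow> c u = c v"
    using assms(2) by (simp add: same_part_def)
qed

lemma inner_vertices_notin:
  assumes "distinct xs" "set xs \<inter> W \<subseteq> {hd xs, last xs}" "0 < i" "Suc i < length xs"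
  shows "xs ! i \<notin> W"
proof
  assume "xs ! i \<in> W"
  have "xs \<noteq> []" "i < length xs"
    using assms(4) by auto
  then have "xs ! i \<in> {hd xs, last xs}"
    using assms(2) \<open>xs ! i \<in> W\<close> nth_mem by blast
  then have "xs ! i = xs ! 0 \<or> xs ! i = xs ! (length xs - 1)"
    using \<open>xs \<noteq> []\<close> by (simp add: hd_conv_nth last_conv_nth)
  then show False
  proof
    assume "xs ! i = xs ! 0"
    then have "i = 0"
      using nth_eq_iff_index_eq[OF assms(1) \<open>i < length xs\<close>, of 0] \<open>xs \<noteq> []\<close> by simp
    then show False
      using assms(3) by simp
  next
    assume "xs ! i = xs ! (length xs - 1)"
    then have "i = length xs - 1"
      using nth_eq_iff_index_eq[OF assms(1) \<open>i < length xs\<close>, of "length xs - 1"] \<open>xs \<noteq> []\<close> by simp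
    then show False
      using assms(4) by simp
  qed
qed

lemma bad_path_if_parity_disagrees:
  assumes "connected_graph G'" "proper_2col G' c" "is_W_path G (verts G') xs"
    "\<not> parity_agrees c xs"
  shows "bad_path G' xs"
proof -
  have "distinct xs" "xs \<noteq> []" "hd xs \<in> verts G'" "last xs \<in> verts G'"
    "set xs \<inter> verts G' \<subseteq> {hd xs, last xs}"
    using assms(3) by (simp_all add: is_W_path_def is_path_def)
  moreover have "same_part G' (hd xs) (last xs) \<longleftrightarrow> c (hd xs) = c (last xs)"
    using same_part_iff[OF assms(1,2)] \<open>hd xs \<in> verts G'\<close> \<open>last xs \<in> verts G'\<close> by blast
  ultimately show ?thesis
    using assms(4) inner_vertices_notin unfolding bad_path_def parity_agrees_def by blast
qed

theorem lemma3p5: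
  fixes G G' B :: "'a graph"
  assumes "is_graph G"
    and "subgraph G' G" and "two_connected G'" and "bipartite G'"
    and "subgraph B G" and "two_connected B" and "subgraph G' B"
    and "\<not> bipartite B"
  shows "\<exists>xs. is_path B xs \<and> bad_path G' xs"
proof (rule ccontr)
  assume no_bad_path: "\<nexists>xs. is_path B xs \<and> bad_path G' xs"
  obtain c where c: "proper_2col G' c"
    using assms(4) by (auto simp: bipartite_def)
  have "connected_graph G'" "finite (verts G')" "card (verts G') \<ge> 3"
    using assms(3) by (simp_all add: two_connected_def is_graph_def)
  then obtain a b where ab: "a \<in> verts G'" "b \<in> verts G'" "a \<noteq> b"
    using card_le_Suc0_iff_eq[of "verts G'"] by auto
  have "parity_consistent B (verts G') c"
    using bad_path_if_parity_disagrees[OF \<open>connected_graph G'\<close> c] no_bad_path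
    unfolding parity_consistent_def is_W_path_def by blast
  moreover have "verts G' \<subseteq> verts B"
    using assms(7) by (simp add: subgraph_def)
  ultimately obtain d where "proper_2col B d"
    using parity_consistent_extends_to_proper_2col[OF assms(6) _ ab] by blast
  then show False
    using assms(8) by (auto simp: bipartite_def)
qed

end
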